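(* Let $G$ be a connected graph with vertex set $V=\{1,\dots,n\}$, let $A$ be a real symmetric $n\times n$ matrix with $\mathcal{G}(A)=G$ such that all nonzero off-diagonal entries of $A$ have the same sign, and let $S\subseteq V$ be a zero forcing set of $G$. Then the real Lie algebra generated by $iA$ and $\{i{\bf e}_j{\bf e}_j^T : j\in S\}$ equals $u(n)$.
   Context: ${\bf e}_j$ is the $j$th standard basis vector of $\mathbb{R}^n$. For a real symmetric $A=[a_{kj}]$, $\mathcal{G}(A)$ is the simple graph on $\{1,\dots,n\}$ with edges $\{kj: a_{kj}\neq0,\ k\neq j\}$. Zero forcing: color vertices black or white; a black vertex $v$ forces a white vertex $w$ if $w$ is the unique white neighbor of $v$, and then $w$ becomes black. $S$ is a zero forcing set if starting with exactly $S$ black, repeated forcing makes all vertices black. The real Lie algebra generated by a set of matrices is the smallest real vector space containing them closed under $[X,Y]=XY-YX$; $u(n)$ is the real Lie algebra of $n\times n$ complex skew-Hermitian matrices. *)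

theory Defs
  imports "HOL-Analysis.Analysis"
begin

text \<open>Vertex set {1..n} is modelled by a finite type 'n (n = CARD('n)).
  A simple graph on 'n is an edge relation E :: 'n => 'n => bool (symmetric, irreflexive).\<close>

definition matrix_graph :: "real^'n^'n \<Rightarrow> 'n \<Rightarrow> 'n \<Rightarrow> bool" where
  "matrix_graph A k j \<longleftrightarrow> k \<noteq> j \<and> A $ k $ j \<noteq> 0"

definition graph_connected :: "('n \<Rightarrow> 'n \<Rightarrow> bool) \<Rightarrow> bool" where
  "graph_connected E \<longleftrightarrow> (\<forall>u v. E\<^sup>*\<^sup>* u v)"

inductive_set forced_closure :: "('n \<Rightarrow> 'n \<Rightarrow> bool) \<Rightarrow> 'n set \<Rightarrow> 'n set"
  for E :: "'n \<Rightarrow> 'n \<Rightarrow> bool" and S :: "'n set" where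
  init: "v \<in> S \<Longrightarrow> v \<in> forced_closure E S"
| force: "\<lbrakk>v \<in> forced_closure E S; E v w;
           \<And>u. E v u \<Longrightarrow> u \<noteq> w \<Longrightarrow> u \<in> forced_closure E S\<rbrakk>
          \<Longrightarrow> w \<in> forced_closure E S"

definition zero_forcing_set :: "('n \<Rightarrow> 'n \<Rightarrow> bool) \<Rightarrow> 'n set \<Rightarrow> bool" where
  "zero_forcing_set E S \<longleftrightarrow> forced_closure E S = UNIV"

definition lie_bracket :: "complex^'n^'n \<Rightarrow> complex^'n^'n \<Rightarrow> complex^'n^'n" where
  "lie_bracket X Y = X ** Y - Y ** X"

inductive_set real_lie_generated :: "(complex^'n^'n) set \<Rightarrow> (complex^'n^'n) set"
  for X :: "(complex^'n^'n) set" where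
  gen: "M \<in> X \<Longrightarrow> M \<in> real_lie_generated X"
| zero: "0 \<in> real_lie_generated X"
| add: "M \<in> real_lie_generated X \<Longrightarrow> N \<in> real_lie_generated X \<Longrightarrow> M + N \<in> real_lie_generated X"
| smult: "M \<in> real_lie_generated X \<Longrightarrow> (r::real) *\<^sub>R M \<in> real_lie_generated X"
| bracket: "M \<in> real_lie_generated X \<Longrightarrow> N \<in> real_lie_generated X \<Longrightarrow> lie_bracket M N \<in> real_lie_generated X"

definition skew_hermitian_matrices :: "(complex^'n^'n) set" where
  "skew_hermitian_matrices = {M. (\<chi> i j. cnj (M $ j $ i)) = - M}"

definition cmat_of_real :: "real^'n^'n \<Rightarrow> complex^'n^'n" where
  "cmat_of_real A = (\<chi> i j. complex_of_real (A $ i $ j))"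

definition diag_unit :: "'n \<Rightarrow> complex^'n^'n" where
  "diag_unit j = (\<chi> k l. if k = j \<and> l = j then 1 else 0)"

definition cmat_scale :: "complex \<Rightarrow> complex^'n^'n \<Rightarrow> complex^'n^'n" where
  "cmat_scale c M = (\<chi> i j. c * M $ i $ j)"

end

theory Submission imports Defs begin

text \<open>Write \<open>D\<^sub>u = i e\<^sub>u e\<^sub>u\<^sup>T\<close>, \<open>K\<^sub>u\<^sub>w = E\<^sub>u\<^sub>w - E\<^sub>w\<^sub>u\<close> and \<open>H\<^sub>u\<^sub>w = i (E\<^sub>u\<^sub>w + E\<^sub>w\<^sub>u)\<close>; these span \<open>u(n)\<close> over the reals.
  The double bracket \<open>-[D\<^sub>u, [D\<^sub>u, Y]]\<close> is the part of \<open>Y\<close> in row and column \<open>u\<close> off the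
  diagonal, so once \<open>D\<^sub>u\<close> is available that part can be subtracted from any element.
  The bracket \<open>[D\<^sub>v, iA]\<close> lives in row and column \<open>v\<close>; deleting the known neighbours of \<open>v\<close>
  leaves a multiple of \<open>K\<^sub>v\<^sub>w\<close> exactly when \<open>w\<close> is the unique unknown neighbour, and then
  \<open>H\<^sub>v\<^sub>w = [D\<^sub>v, K\<^sub>v\<^sub>w]\<close> and \<open>D\<^sub>w = D\<^sub>v - [K\<^sub>v\<^sub>w, H\<^sub>v\<^sub>w]/2\<close>. Thus every zero forcing step \<open>v \<rightarrow> w\<close>
  produces \<open>D\<^sub>w\<close>, so all \<open>D\<^sub>u\<close> are generated; every edge then gives \<open>K\<^sub>v\<^sub>w\<close>, connectivity and
  \<open>[K\<^sub>u\<^sub>v, K\<^sub>v\<^sub>w] = K\<^sub>u\<^sub>w\<close> give all \<open>K\<^sub>u\<^sub>w\<close>, and \<open>H\<^sub>u\<^sub>w = [D\<^sub>u, K\<^sub>u\<^sub>w]\<close>.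
  The sign condition on the off-diagonal entries of \<open>A\<close> is not needed for this.\<close>

definition mat_unit :: "'n \<Rightarrow> 'n \<Rightarrow> complex^'n^'n" where
  "mat_unit a b = (\<chi> k l. if k = a \<and> l = b then 1 else 0)"

definition skew_unit :: "'n \<Rightarrow> 'n \<Rightarrow> complex^'n^'n" where
  "skew_unit a b = mat_unit a b - mat_unit b a"

definition imag_sym_unit :: "'n \<Rightarrow> 'n \<Rightarrow> complex^'n^'n" where
  "imag_sym_unit a b = cmat_scale \<i> (mat_unit a b + mat_unit b a)"

definition imag_diag_unit :: "'n \<Rightarrow> complex^'n^'n" where
  "imag_diag_unit u = cmat_scale \<i> (diag_unit u)"

lemma matrix_mult_entry:
  "((X::complex^'m^'k) ** (Y::complex^'p^'m)) $ k $ l = (\<Sum>m\<in>UNIV. X$k$m * Y$m$l)"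
  by (simp add: matrix_matrix_mult_def)

lemma lie_bracket_entry: "lie_bracket X Y $ k $ l = (X ** Y)$k$l - (Y ** X)$k$l"
  by (simp add: lie_bracket_def)

lemma scaleR_matrix_entry: "((r::real) *\<^sub>R (M::complex^'n^'n))$k$l = complex_of_real r * M$k$l"
  by (simp add: scaleR_conv_of_real[where x="M$k$l"])

lemma skew_unit_entry:
  "skew_unit a b $ k $ l = (if k = a \<and> l = b then 1 else 0) - (if k = b \<and> l = a then 1 else 0)"
  by (simp add: skew_unit_def mat_unit_def)

lemma imag_sym_unit_entry:
  "imag_sym_unit a b $ k $ l = \<i> * ((if k = a \<and> l = b then 1 else 0) + (if k = b \<and> l = a then 1 else 0))"
  by (simp add: imag_sym_unit_def mat_unit_def cmat_scale_def)

lemma imag_diag_unit_entry: "imag_diag_unit u $ k $ l = (if k = u \<and> l = u then \<i> else 0)"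
  by (simp add: imag_diag_unit_def diag_unit_def cmat_scale_def)

lemma sum_delta_mult_left:
  "(\<Sum>m\<in>(UNIV::'n::finite set). (if m = b then c else 0) * f m) = (c::complex) * f b"
  by (simp add: if_distrib[of "\<lambda>x. x * _"] cong: if_cong)

lemma sum_delta_mult_right:
  "(\<Sum>m\<in>(UNIV::'n::finite set). f m * (if m = b then c else 0)) = f b * (c::complex)"
  by (simp add: if_distrib[of "\<lambda>x. _ * x"] cong: if_cong)

lemmas sum_delta_mult = sum_delta_mult_left sum_delta_mult_right

lemma imag_diag_unit_mult_entry: "(imag_diag_unit u ** Y) $ k $ l = (if k = u then \<i> * Y$u$l else 0)"
  by (cases "k = u") (simp_all add: matrix_mult_entry imag_diag_unit_entry sum_delta_mult sum_negf)

lemma mult_imag_diag_unit_entry: "(Y ** imag_diag_unit u) $ k $ l = (if l = u then Y$k$u * \<i> else 0)"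
  by (cases "l = u") (simp_all add: matrix_mult_entry imag_diag_unit_entry sum_delta_mult sum_negf)

lemma skew_unit_mult_entry:
  "(skew_unit a b ** Y) $ k $ l = (if k = a then Y$b$l else 0) - (if k = b then Y$a$l else 0)"
  by (cases "k = a"; cases "k = b")
    (simp_all add: matrix_mult_entry skew_unit_entry left_diff_distrib sum_subtractf sum_negf sum_delta_mult)

lemma mult_skew_unit_entry:
  "(Y ** skew_unit a b) $ k $ l = (if l = b then Y$k$a else 0) - (if l = a then Y$k$b else 0)"
  by (cases "l = a"; cases "l = b")
    (simp_all add: matrix_mult_entry skew_unit_entry right_diff_distrib sum_subtractf sum_negf sum_delta_mult)

lemmas unit_mult_entries = imag_diag_unit_mult_entry mult_imag_diag_unit_entry
  skew_unit_mult_entry mult_skew_unit_entry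

lemma symmetric_matrix_entry: "transpose A = A \<Longrightarrow> A$k$j = A$j$k"
  by (metis transpose_def vec_lambda_beta)

lemma double_bracket_imag_diag_unit:
  "(\<chi> k l. if (k = u) \<noteq> (l = u) then Y$k$l else 0)
     = (-1::real) *\<^sub>R lie_bracket (imag_diag_unit u) (lie_bracket (imag_diag_unit u) Y)"
  by (auto simp: vec_eq_iff lie_bracket_entry unit_mult_entries algebra_simps)

lemma bracket_imag_diag_skew_unit:
  "v \<noteq> w \<Longrightarrow> lie_bracket (imag_diag_unit v) (skew_unit v w) = imag_sym_unit v w"
  by (auto simp: vec_eq_iff lie_bracket_entry unit_mult_entries skew_unit_entry
      imag_diag_unit_entry imag_sym_unit_entry algebra_simps)

lemma imag_diag_unit_transfer:
  "v \<noteq> w \<Longrightarrow> imag_diag_unit w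
     = imag_diag_unit v - (1/2::real) *\<^sub>R lie_bracket (skew_unit v w) (imag_sym_unit v w)"
  by (auto simp: vec_eq_iff lie_bracket_entry unit_mult_entries imag_diag_unit_entry
      imag_sym_unit_entry algebra_simps; simp add: scaleR_conv_of_real)

lemma bracket_skew_units:
  "u \<noteq> v \<Longrightarrow> v \<noteq> w \<Longrightarrow> u \<noteq> w \<Longrightarrow> lie_bracket (skew_unit u v) (skew_unit v w) = skew_unit u w"
  by (auto simp: vec_eq_iff lie_bracket_entry unit_mult_entries skew_unit_entry)

lemma imag_sym_unit_diag: "imag_sym_unit v v = (2::real) *\<^sub>R imag_diag_unit v"
  by (auto simp: vec_eq_iff imag_diag_unit_entry imag_sym_unit_entry scaleR_conv_of_real)

lemma skew_hermitian_iff: "M \<in> skew_hermitian_matrices \<longleftrightarrow> (\<forall>i j. cnj (M$j$i) = - M$i$j)"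
  by (simp add: skew_hermitian_matrices_def vec_eq_iff)

lemma cnj_matrix_mult_skew_hermitian:
  assumes "P \<in> skew_hermitian_matrices" "Q \<in> skew_hermitian_matrices"
  shows "cnj ((P ** Q)$j$i) = (Q ** P)$i$j"
proof -
  have "cnj ((P ** Q)$j$i) = (\<Sum>m\<in>UNIV. cnj (P$j$m) * cnj (Q$m$i))"
    by (simp add: matrix_mult_entry cnj_sum)
  also have "\<dots> = (\<Sum>m\<in>UNIV. Q$i$m * P$m$j)"
    using assms by (intro sum.cong) (simp_all add: skew_hermitian_iff)
  finally show ?thesis by (simp add: matrix_mult_entry)
qed

lemma lie_bracket_skew_hermitian:
  "P \<in> skew_hermitian_matrices \<Longrightarrow> Q \<in> skew_hermitian_matrices
    \<Longrightarrow> lie_bracket P Q \<in> skew_hermitian_matrices"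
  unfolding skew_hermitian_iff[of "lie_bracket P Q"] lie_bracket_entry complex_cnj_diff
  by (simp add: cnj_matrix_mult_skew_hermitian)

lemma sum_sum_delta:
  "(\<Sum>u\<in>UNIV. \<Sum>w\<in>UNIV. if k = u \<and> l = w then f u w else 0) = (f k l::complex)"
  for f :: "'n::finite \<Rightarrow> 'n \<Rightarrow> complex"
proof -
  have "(\<Sum>w\<in>UNIV. if k = u \<and> l = w then f u w else 0) = (if k = u then f u l else 0)" for u
    by (cases "k = u") (simp_all add: sum.delta')
  thus ?thesis by simp
qed

lemma sum_sum_delta_transposed:
  "(\<Sum>u\<in>UNIV. \<Sum>w\<in>UNIV. if k = w \<and> l = u then f u w else 0) = (f l k::complex)"
  for f :: "'n::finite \<Rightarrow> 'n \<Rightarrow> complex"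
proof -
  have "(\<Sum>w\<in>UNIV. if k = w \<and> l = u then f u w else 0) = (if l = u then f u k else 0)" for u
    by (cases "l = u") (simp_all add: sum.delta')
  thus ?thesis by simp
qed

lemma skew_hermitian_decomposition:
  assumes "M \<in> skew_hermitian_matrices"
  shows "M = (\<Sum>u\<in>UNIV. \<Sum>w\<in>UNIV.
               (Re (M$u$w) / 2) *\<^sub>R skew_unit u w + (Im (M$u$w) / 2) *\<^sub>R imag_sym_unit u w)"
    (is "M = (\<Sum>u\<in>UNIV. \<Sum>w\<in>UNIV. ?T u w)")
proof -
  have entry: "?T u w $ k $ l = (if k = u \<and> l = w then M$u$w / 2 else 0)
      + (if k = w \<and> l = u then (- Re (M$u$w) + \<i> * Im (M$u$w)) / 2 else 0)" for u w k l
    by (cases "k = u"; cases "l = w"; cases "k = w"; cases "l = u")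
      (simp_all add: scaleR_matrix_entry skew_unit_entry imag_sym_unit_entry complex_eq_iff)
  have "(\<Sum>u\<in>UNIV. \<Sum>w\<in>UNIV. ?T u w $ k $ l) = M$k$l" for k l
  proof -
    have "cnj (M$l$k) = - M$k$l"
      using assms by (simp add: skew_hermitian_iff)
    then have "Re (M$l$k) = - Re (M$k$l)" "Im (M$l$k) = Im (M$k$l)"
      by (auto simp: complex_eq_iff)
    then show ?thesis
      by (simp only: entry sum.distrib sum_sum_delta sum_sum_delta_transposed)
        (simp add: complex_eq_iff)
  qed
  then show ?thesis by (simp add: vec_eq_iff sum_component)
qed

lemma real_lie_generated_diff:
  assumes "M \<in> real_lie_generated X" "N \<in> real_lie_generated X"
  shows "M - N \<in> real_lie_generated X"
  using real_lie_generated.add[OF assms(1) real_lie_generated.smult[OF assms(2), of "-1"]] by simp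

lemma real_lie_generated_sum:
  "(\<And>x. x \<in> F \<Longrightarrow> f x \<in> real_lie_generated X) \<Longrightarrow> sum f F \<in> real_lie_generated X"
  by (induction F rule: infinite_finite_induct) (auto intro: real_lie_generated.intros)

lemma real_lie_generated_skew_hermitian:
  assumes "X \<subseteq> skew_hermitian_matrices"
  shows "real_lie_generated X \<subseteq> skew_hermitian_matrices"
proof
  fix M assume "M \<in> real_lie_generated X"
  then show "M \<in> skew_hermitian_matrices"
    by (induction rule: real_lie_generated.induct)
      (use assms in \<open>auto simp: lie_bracket_skew_hermitian\<close>,
       auto simp: skew_hermitian_iff scaleR_matrix_entry)
qed

lemma skew_hermitian_subset_real_lie_generated:
  fixes X :: "(complex^'n^'n) set"
  assumes "\<And>u w. skew_unit u w \<in> real_lie_generated X"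
    and "\<And>u w. imag_sym_unit u w \<in> real_lie_generated X"
  shows "skew_hermitian_matrices \<subseteq> real_lie_generated X"
proof
  fix M :: "complex^'n^'n" assume "M \<in> skew_hermitian_matrices"
  then show "M \<in> real_lie_generated X"
    by (subst skew_hermitian_decomposition)
      (auto intro!: real_lie_generated_sum real_lie_generated.add real_lie_generated.smult assms)
qed

lemma real_lie_generated_delete_vertices:
  assumes "finite N" "\<And>u. u \<in> N \<Longrightarrow> imag_diag_unit u \<in> real_lie_generated X"
    and "Y \<in> real_lie_generated X"
  shows "(\<chi> k l. if k \<noteq> l \<and> (k \<in> N \<or> l \<in> N) then 0 else Y$k$l) \<in> real_lie_generated X"
  using assms
proof (induction N rule: finite_induct)
  case empty
  then show ?case by (simp add: vec_eq_iff)
next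
  case (insert u N)
  let ?R = "\<lambda>N. \<chi> k l. if k \<noteq> l \<and> (k \<in> N \<or> l \<in> N) then 0 else Y$k$l"
  have "?R (insert u N) = ?R N - (\<chi> k l. if (k = u) \<noteq> (l = u) then ?R N$k$l else 0)"
    by (auto simp: vec_eq_iff)
  also have "\<dots> \<in> real_lie_generated X"
    unfolding double_bracket_imag_diag_unit using insert
    by (intro real_lie_generated_diff real_lie_generated.smult real_lie_generated.bracket) auto
  finally show ?case .
qed

lemma skew_unit_in_real_lie_generated_if_force:
  fixes A :: "real^'n^'n"
  assumes sym: "transpose A = A"
    and A: "cmat_scale \<i> (cmat_of_real A) \<in> real_lie_generated X"
    and v: "imag_diag_unit v \<in> real_lie_generated X"
    and nbrs: "\<And>u. matrix_graph A v u \<Longrightarrow> u \<noteq> w \<Longrightarrow> imag_diag_unit u \<in> real_lie_generated X"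
    and edge: "matrix_graph A v w"
  shows "skew_unit v w \<in> real_lie_generated X"
proof -
  have vw: "v \<noteq> w" "A$v$w \<noteq> 0"
    using edge by (auto simp: matrix_graph_def)
  define B where "B = lie_bracket (imag_diag_unit v) (cmat_scale \<i> (cmat_of_real A))"
  have B_entry: "B$k$l = (if k = v then - of_real (A$v$l) else 0) + (if l = v then of_real (A$k$v) else 0)"
    for k l
    by (auto simp: B_def lie_bracket_entry unit_mult_entries cmat_scale_def cmat_of_real_def
        algebra_simps)
  define N where "N = {u. matrix_graph A v u \<and> u \<noteq> w}"
  have "(\<chi> k l. if k \<noteq> l \<and> (k \<in> N \<or> l \<in> N) then 0 else B$k$l) \<in> real_lie_generated X"
    using nbrs A v unfolding B_def
    by (intro real_lie_generated_delete_vertices real_lie_generated.bracket) (auto simp: N_def)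
  also have "(\<chi> k l. if k \<noteq> l \<and> (k \<in> N \<or> l \<in> N) then 0 else B$k$l) = (- A$v$w) *\<^sub>R skew_unit v w"
  proof -
    have "(if k \<noteq> l \<and> (k \<in> N \<or> l \<in> N) then 0 else B$k$l) = ((- A$v$w) *\<^sub>R skew_unit v w) $ k $ l"
      for k l
      using vw symmetric_matrix_entry[OF sym, of k v]
      by (cases "k = v"; cases "l = w"; cases "l = v"; cases "k = w")
        (auto simp: B_entry N_def matrix_graph_def skew_unit_entry scaleR_matrix_entry
          scaleR_conv_of_real[where 'a=complex])
    then show ?thesis by (simp add: vec_eq_iff)
  qed
  finally have "(-1 / A$v$w) *\<^sub>R ((- A$v$w) *\<^sub>R skew_unit v w) \<in> real_lie_generated X"
    by (rule real_lie_generated.smult)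
  then show ?thesis using vw by simp
qed

lemma imag_diag_unit_in_real_lie_generated_if_forced:
  fixes A :: "real^'n^'n"
  assumes sym: "transpose A = A"
    and A: "cmat_scale \<i> (cmat_of_real A) \<in> real_lie_generated X"
    and S: "\<And>j. j \<in> S \<Longrightarrow> imag_diag_unit j \<in> real_lie_generated X"
    and "v \<in> forced_closure (matrix_graph A) S"
  shows "imag_diag_unit v \<in> real_lie_generated X"
  using assms(4)
proof (induction rule: forced_closure.induct)
  case (init v)
  then show ?case by (rule S)
next
  case (force v w)
  have vw: "v \<noteq> w" using force.hyps(2) by (simp add: matrix_graph_def)
  have K: "skew_unit v w \<in> real_lie_generated X"
    using force by (intro skew_unit_in_real_lie_generated_if_force[OF sym A]) auto
  have H: "imag_sym_unit v w \<in> real_lie_generated X"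
    unfolding bracket_imag_diag_skew_unit[OF vw, symmetric]
    using force.IH(1) K by (rule real_lie_generated.bracket)
  show ?case
    unfolding imag_diag_unit_transfer[OF vw]
    using force.IH(1) K H
    by (intro real_lie_generated_diff real_lie_generated.smult real_lie_generated.bracket)
qed

lemma skew_unit_in_real_lie_generated_if_connected:
  fixes A :: "real^'n^'n"
  assumes sym: "transpose A = A"
    and conn: "graph_connected (matrix_graph A)"
    and A: "cmat_scale \<i> (cmat_of_real A) \<in> real_lie_generated X"
    and D: "\<And>u. imag_diag_unit u \<in> real_lie_generated X"
  shows "skew_unit u w \<in> real_lie_generated X"
proof -
  have edge: "skew_unit v w \<in> real_lie_generated X" if "matrix_graph A v w" for v w
    using that by (intro skew_unit_in_real_lie_generated_if_force[OF sym A D D])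
  have "(matrix_graph A)\<^sup>*\<^sup>* u w"
    using conn by (simp add: graph_connected_def)
  then show ?thesis
  proof (induction rule: rtranclp_induct)
    case base
    then show ?case by (simp add: skew_unit_def real_lie_generated.zero)
  next
    case (step v w)
    have "v \<noteq> w" using step.hyps(2) by (simp add: matrix_graph_def)
    consider "u = w" | "u = v" | "u \<noteq> v" "u \<noteq> w" by blast
    then show ?case
    proof cases
      case 1
      then show ?thesis by (simp add: skew_unit_def real_lie_generated.zero)
    next
      case 2
      then show ?thesis using edge step.hyps(2) by simp
    next
      case 3
      then show ?thesis
        using bracket_skew_units[OF 3(1) \<open>v \<noteq> w\<close> 3(2)] step.IH edge[OF step.hyps(2)]
        by (metis real_lie_generated.bracket)
    qed
  qed
qed

theorem corollary4p2:
  fixes A :: "real^'n^'n" and G :: "'n \<Rightarrow> 'n \<Rightarrow> bool" and S :: "'n set"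
  assumes "transpose A = A"
    and "G = matrix_graph A"
    and "graph_connected G"
    and "(\<forall>k j. k \<noteq> j \<and> A $ k $ j \<noteq> 0 \<longrightarrow> A $ k $ j > 0)
       \<or> (\<forall>k j. k \<noteq> j \<and> A $ k $ j \<noteq> 0 \<longrightarrow> A $ k $ j < 0)"
    and "zero_forcing_set G S"
  shows "real_lie_generated
           (insert (cmat_scale \<i> (cmat_of_real A)) ((\<lambda>j. cmat_scale \<i> (diag_unit j)) ` S))
         = skew_hermitian_matrices"
    (is "real_lie_generated ?X = _")
proof
  have A: "cmat_scale \<i> (cmat_of_real A) \<in> real_lie_generated ?X"
    by (simp add: real_lie_generated.gen)
  have D: "imag_diag_unit u \<in> real_lie_generated ?X" for u
    using assms(2,5) imag_diag_unit_in_real_lie_generated_if_forced[OF assms(1) A, of S]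
    by (auto simp: zero_forcing_set_def imag_diag_unit_def real_lie_generated.gen)
  have K: "skew_unit u w \<in> real_lie_generated ?X" for u w
    using assms(1-3) A D by (simp add: skew_unit_in_real_lie_generated_if_connected)
  have H: "imag_sym_unit u w \<in> real_lie_generated ?X" for u w
  proof (cases "u = w")
    case True
    then show ?thesis using D by (simp add: imag_sym_unit_diag real_lie_generated.smult)
  next
    case False
    then show ?thesis using D K by (metis bracket_imag_diag_skew_unit real_lie_generated.bracket)
  qed
  show "skew_hermitian_matrices \<subseteq> real_lie_generated ?X"
    using K H by (rule skew_hermitian_subset_real_lie_generated)
  have "?X \<subseteq> skew_hermitian_matrices"
    using symmetric_matrix_entry[OF assms(1)]
    by (auto simp: skew_hermitian_iff cmat_scale_def cmat_of_real_def diag_unit_def)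
  then show "real_lie_generated ?X \<subseteq> skew_hermitian_matrices"
    by (rule real_lie_generated_skew_hermitian)
qed

end
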